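(* Let $A$ be an $n\times n$ real matrix with $n$ distinct (possibly complex) eigenvalues $\lambda_1,\dots,\lambda_n$. For each $i$, let $x_i\in\mathbb{C}^n$ be the left eigenvector of $A$ associated with $\lambda_i$ (i.e. $x_i^H A=\lambda_i x_i^H$) whose Euclidean norm equals $1$ and whose first nonzero entry (counting from the top) is positive. Let $\mathcal{S}_v\subseteq\{1,2,\dots,n\}$. Then there exists a vector $b\in\mathbb{R}^n$ with $\mathrm{Supp}(b)\subseteq\mathcal{S}_v$ such that the continuous-time linear time-invariant system $\frac{dx(t)}{dt}=Ax(t)+bu(t)$ is controllable if and only if $\mathrm{Supp}(x_i)\cap\mathcal{S}_v\neq\emptyset$ for every $i\in\{1,2,\dots,n\}$.
   Context: For a vector $x$, $\mathrm{Supp}(x)$ denotes the set of row indices $j$ with $x_j\neq 0$. The superscript $H$ denotes conjugate transpose. Controllability of $\frac{dx}{dt}=Ax+Bu$ (equivalently, of the pair $(A,B)$) is the usual notion for continuous-time LTI systems. *)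

theory Defs
  imports "HOL-Analysis.Analysis"
begin

definition cmat :: "real^'n^'n \<Rightarrow> complex^'n^'n" where
  "cmat A = (\<chi> i j. complex_of_real (A $ i $ j))"

definition cvec_cnj :: "complex^'n \<Rightarrow> complex^'n" where
  "cvec_cnj x = (\<chi> j. cnj (x $ j))"

definition supp_vec :: "'a::zero^'n \<Rightarrow> 'n set" where
  "supp_vec x = {j. x $ j \<noteq> 0}"

definition eigenvalues :: "real^'n^'n \<Rightarrow> complex set" where
  "eigenvalues A = {l. \<exists>v. v \<noteq> 0 \<and> cmat A *v v = l *s v}"

definition left_eigvec :: "real^'n^'n \<Rightarrow> complex \<Rightarrow> complex^'n \<Rightarrow> bool" where
  "left_eigvec A l x \<longleftrightarrow> x \<noteq> 0 \<and> cvec_cnj x v* cmat A = l *s cvec_cnj x"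

definition first_nonzero_pos :: "complex^'n::{finite,linorder} \<Rightarrow> bool" where
  "first_nonzero_pos x \<longleftrightarrow>
     (\<exists>k. x $ k \<noteq> 0 \<and> (\<forall>j<k. x $ j = 0) \<and> Im (x $ k) = 0 \<and> Re (x $ k) > 0)"

definition controllable :: "real^'n^'n \<Rightarrow> real^'n \<Rightarrow> bool" where
  "controllable A b \<longleftrightarrow>
     (\<forall>x0 x1. \<exists>T>0. \<exists>u :: real \<Rightarrow> real. \<exists>x :: real \<Rightarrow> real^'n.
        continuous_on {0..T} u \<and> x 0 = x0 \<and> x T = x1 \<and>
        (\<forall>t\<in>{0..T}. (x has_vector_derivative (A *v x t + u t *\<^sub>R b)) (at t within {0..T})))"

end

theory Submission
  imports Defs "HOL-Computational_Algebra.Polynomial"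
begin

text \<open>
  Necessity is the Popov--Belevitch--Hautus test: if a row vector w \<noteq> 0 satisfies
  w A = \<lambda> w and w b = 0, then w x(t) = exp(\<lambda> t) w x(0) along every trajectory, so the
  state cannot be steered from 0 to a vector not annihilated by w.

  For sufficiency pick a left eigenvector w_\<lambda> for each of the n eigenvalues. Their
  supports meet S_v, so taking b_j = t^(\<iota> j) on S_v, for an injection \<iota> into \<nat>, turns
  every w_\<lambda> b into a nonzero polynomial in t, and a real t avoiding all their roots gives
  w_\<lambda> b \<noteq> 0 for every \<lambda>. As the eigenvalues are distinct, the w_\<lambda> form a basis, and a
  Vandermonde argument shows that no nonzero vector is orthogonal to all A^k b. A spanning
  Krylov sequence brings (A, b) into controllable canonical form, and in those coordinates
  a Hermite interpolating polynomial p gives the explicit trajectory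
  x(t) = \<Sum>_m p^(m)(t) h_(m+1) between any two states in time 1.
\<close>

section \<open>Hermite interpolation\<close>

lemma bezout_power_left:
  fixes a b :: "'a::comm_ring_1"
  assumes "r * a + s * b = 1"
  shows "\<exists>r s. r * a ^ n + s * b = 1"
proof (induction n)
  case 0
  show ?case by (intro exI[of _ 1] exI[of _ 0]) simp
next
  case (Suc n)
  then obtain r' s' where "r' * a ^ n + s' * b = 1" by blast
  then have "r' * a ^ n * (r * a + s * b) + s' * b = 1" using assms by simp
  then have "(r' * r) * a ^ Suc n + (r' * a ^ n * s + s') * b = 1" by (simp add: algebra_simps)
  then show ?case by blast
qed

lemma bezout_powers:
  fixes a b :: "'a::comm_ring_1"
  assumes "r * a + s * b = 1"
  shows "\<exists>r s. r * a ^ m + s * b ^ n = 1"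
proof -
  obtain r' s' where "r' * a ^ m + s' * b = 1" using bezout_power_left[OF assms] by blast
  then have "s' * b + r' * a ^ m = 1" by (simp add: add.commute)
  then obtain s r where "s * b ^ n + r * a ^ m = 1" using bezout_power_left by blast
  then show ?thesis by (metis add.commute)
qed

lemma pcompose_power: "(p ^ n) \<circ>\<^sub>p q = (p \<circ>\<^sub>p q) ^ n"
  by (induction n) (simp_all add: pcompose_mult pcompose_1)

lemma pcompose_shift_root: "[:- a, 1:] \<circ>\<^sub>p [:a, 1 :: 'a::comm_ring_1:] = [:0, 1:]"
  by (simp add: pcompose_pCons)

lemma pcompose_shift_inverse: "p \<circ>\<^sub>p [:- a, 1:] \<circ>\<^sub>p [:a, 1 :: 'a::comm_ring_1:] = p"
  by (metis pcompose_assoc pcompose_idR pcompose_shift_root)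

lemma poly_higher_pderiv_0: "poly ((pderiv ^^ m) p) 0 = fact m * coeff (p :: 'a::field_char_0 poly) m"
  by (simp add: poly_0_coeff_0 coeff_higher_pderiv pochhammer_fact)

lemma higher_pderiv_pcompose_shift:
  "(pderiv ^^ m) (p \<circ>\<^sub>p [:a, 1:]) = (pderiv ^^ m) p \<circ>\<^sub>p [:a, 1 :: 'a::field_char_0:]"
  by (induction m) (simp_all add: pderiv_pcompose pderiv_pCons)

lemma poly_higher_pderiv:
  "poly ((pderiv ^^ m) p) a = fact m * coeff (p \<circ>\<^sub>p [:a, 1 :: 'a::field_char_0:]) m"
  by (simp flip: poly_higher_pderiv_0 add: higher_pderiv_pcompose_shift poly_pcompose)

lemma poly_higher_pderiv_eq_if_dvd:
  fixes p q :: "'a::field_char_0 poly"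
  assumes "[:- a, 1:] ^ N dvd p - q" "m < N"
  shows "poly ((pderiv ^^ m) p) a = poly ((pderiv ^^ m) q) a"
proof -
  obtain r where "p - q = [:- a, 1:] ^ N * r" using assms(1) by (elim dvdE)
  then have "(p - q) \<circ>\<^sub>p [:a, 1:] = monom 1 N * (r \<circ>\<^sub>p [:a, 1:])"
    by (simp add: pcompose_mult pcompose_power pcompose_shift_root monom_altdef)
  then have "p \<circ>\<^sub>p [:a, 1:] = q \<circ>\<^sub>p [:a, 1:] + monom 1 N * (r \<circ>\<^sub>p [:a, 1:])"
    by (simp add: pcompose_diff algebra_simps)
  then show ?thesis using assms(2) by (simp add: poly_higher_pderiv coeff_monom_mult)
qed

lemma taylor_interpolation:
  fixes \<gamma> :: "nat \<Rightarrow> 'a::field_char_0"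
  shows "\<exists>p. \<forall>m<N. poly ((pderiv ^^ m) p) a = \<gamma> m"
proof (intro exI allI impI)
  fix m assume "m < N"
  then show "poly ((pderiv ^^ m) ((\<Sum>k<N. monom (\<gamma> k / fact k) k) \<circ>\<^sub>p [:- a, 1:])) a = \<gamma> m"
    by (simp add: poly_higher_pderiv pcompose_shift_inverse coeff_sum)
qed

lemma hermite_interpolation:
  fixes \<alpha> \<beta> :: "nat \<Rightarrow> 'a::field_char_0"
  assumes "a \<noteq> b"
  shows "\<exists>p. \<forall>m<N. poly ((pderiv ^^ m) p) a = \<alpha> m \<and> poly ((pderiv ^^ m) p) b = \<beta> m"
proof -
  define X Y where "X = [:- a, 1:] ^ N" and "Y = [:- b, 1:] ^ N"
  have "[:1 / (b - a):] * ([:- a, 1:] - [:- b, 1:]) = 1"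
    using assms by (simp add: one_pCons flip: diff_divide_distrib)
  then have "[:1 / (b - a):] * [:- a, 1:] + (- [:1 / (b - a):]) * [:- b, 1:] = 1"
    by (metis add_uminus_conv_diff mult_minus_left right_diff_distrib)
  then obtain r s where rs: "r * X + s * Y = 1"
    unfolding X_def Y_def by (blast dest: bezout_powers)
  obtain P where P: "\<forall>m<N. poly ((pderiv ^^ m) P) a = \<alpha> m" using taylor_interpolation by blast
  obtain Q where Q: "\<forall>m<N. poly ((pderiv ^^ m) Q) b = \<beta> m" using taylor_interpolation by blast
  \<comment> \<open>Chinese remainder theorem: p \<equiv> P mod X and p \<equiv> Q mod Y.\<close>
  define p where "p = P * s * Y + Q * r * X"
  have "p - P = X * (Q * r - P * r)" and "p - Q = Y * (P * s - Q * s)"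
    using rs by (simp_all add: p_def algebra_simps flip: eq_diff_eq)
  then have "X dvd p - P" "Y dvd p - Q" by simp_all
  then show ?thesis using P Q unfolding X_def Y_def
    by (metis poly_higher_pderiv_eq_if_dvd)
qed

section \<open>Controllability from a spanning Krylov sequence\<close>

definition krylov :: "real^'n^'n \<Rightarrow> real^'n \<Rightarrow> nat \<Rightarrow> real^'n" where
  "krylov A b k = ((\<lambda>v. A *v v) ^^ k) b"

lemma krylov_0 [simp]: "krylov A b 0 = b"
  and krylov_Suc [simp]: "krylov A b (Suc k) = A *v krylov A b k"
  by (simp_all add: krylov_def)

lemma span_image_sum:
  fixes f :: "'i \<Rightarrow> 'v::real_vector"
  assumes "finite I" "v \<in> span (f ` I)"
  obtains c where "v = (\<Sum>i\<in>I. c i *\<^sub>R f i)"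
proof -
  from assms(2) have "\<exists>c. v = (\<Sum>i\<in>I. c i *\<^sub>R f i)"
  proof (induction rule: span_induct_alt)
    case base
    show ?case by (intro exI[of _ "\<lambda>_. 0"]) simp
  next
    case (step a x y)
    then obtain j c where "j \<in> I" "x = f j" "y = (\<Sum>i\<in>I. c i *\<^sub>R f i)" by blast
    then have "a *\<^sub>R x + y = (\<Sum>i\<in>I. (c i + (if i = j then a else 0)) *\<^sub>R f i)"
      using assms(1) by (simp add: scaleR_add_left sum.distrib if_distrib[of "\<lambda>r. r *\<^sub>R _"] cong: if_cong)
    then show ?case by (rule exI[where x="\<lambda>i. c i + (if i = j then a else 0)"])
  qed
  then show ?thesis using that by blast
qed

lemma span_matrix_invariant:
  fixes A :: "real^'n^'n"
  assumes "\<And>v. v \<in> S \<Longrightarrow> A *v v \<in> span S" "v \<in> span S"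
  shows "A *v v \<in> span S"
proof -
  have "subspace {x. A *v x \<in> span S}"
    by (rule linear_subspace_linear_preimage) (auto simp: matrix_vector_mul_linear subspace_span)
  then show ?thesis using span_minimal[of S "{x. A *v x \<in> span S}"] assms by blast
qed

lemma krylov_in_span_lessThan_exists:
  fixes A :: "real^'n^'n"
  shows "\<exists>N. krylov A b N \<in> span (krylov A b ` {..<N})"
proof (rule ccontr)
  assume H: "\<not> ?thesis"
  let ?K = "krylov A b"
  have "independent (?K ` {..<k}) \<and> card (?K ` {..<k}) = k" for k
  proof (induction k)
    case (Suc k)
    have "?K k \<notin> span (?K ` {..<k})" using H by blast
    then have "?K k \<notin> ?K ` {..<k}" by (meson span_base)
    with Suc.IH \<open>?K k \<notin> span _\<close> show ?case
      by (simp add: lessThan_Suc independent_insert card_insert_disjoint)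
  qed (simp add: independent_empty)
  then show False
    using independent_bound[of "?K ` {..<Suc DIM(real^'n)}"] by auto
qed

lemma krylov_in_span:
  assumes "krylov A b N \<in> span (krylov A b ` {..<N})"
  shows "krylov A b k \<in> span (krylov A b ` {..<N})"
proof (induction k)
  case 0
  show ?case using assms by (cases N) (auto intro!: span_base rev_image_eqI[of 0])
next
  case (Suc k)
  have "A *v krylov A b j \<in> span (krylov A b ` {..<N})" if "j < N" for j
    using that assms by (cases "Suc j = N") (auto intro!: span_base rev_image_eqI[of "Suc j"] simp flip: krylov_Suc)
  with Suc show ?case by (auto intro: span_matrix_invariant)
qed

text \<open>If K N = (\<Sum>i<N. a i * K i) for K = krylov A b, the vectors
  h m = K (N - m) - (\<Sum>i\<in>{m..<N}. a i * K (i - m)) form the basis of the controllable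
  canonical form.\<close>

definition krylov_companion :: "real^'n^'n \<Rightarrow> real^'n \<Rightarrow> (nat \<Rightarrow> real) \<Rightarrow> nat \<Rightarrow> nat \<Rightarrow> real^'n" where
  "krylov_companion A b a N m =
     (\<Sum>i\<le>N - m. (if i + m = N then 1 else - a (i + m)) *\<^sub>R krylov A b i)"

lemma krylov_companion_top: "krylov_companion A b a N N = b"
  by (simp add: krylov_companion_def)

lemma krylov_companion_0:
  assumes "krylov A b N = (\<Sum>i<N. a i *\<^sub>R krylov A b i)"
  shows "krylov_companion A b a N 0 = 0"
  using assms by (simp add: krylov_companion_def sum_negf flip: lessThan_Suc_atMost)

lemma krylov_companion_step:
  assumes "m < N"
  shows "A *v krylov_companion A b a N (Suc m) = krylov_companion A b a N m + a m *\<^sub>R b"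
proof -
  obtain d where d: "N - m = Suc d" "N - Suc m = d" using assms by (metis Suc_diff_Suc)
  have "krylov_companion A b a N m =
      - a m *\<^sub>R b + (\<Sum>i\<le>d. (if Suc i + m = N then 1 else - a (Suc i + m)) *\<^sub>R krylov A b (Suc i))"
    unfolding krylov_companion_def d(1) sum.atMost_Suc_shift using assms by simp
  moreover have "A *v krylov_companion A b a N (Suc m) =
      (\<Sum>i\<le>d. (if Suc i + m = N then 1 else - a (Suc i + m)) *\<^sub>R krylov A b (Suc i))"
    unfolding krylov_companion_def d(2) by (simp add: vec.sum matrix_vector_mult_scaleR cong: if_cong)
  ultimately show ?thesis by simp
qed

lemma krylov_companion_basis:
  fixes A :: "real^'n^'n"
  assumes "span (range (krylov A b)) = UNIV"
  obtains N a where "krylov A b N = (\<Sum>i<N. a i *\<^sub>R krylov A b i)"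
    "span ((\<lambda>m. krylov_companion A b a N (Suc m)) ` {..<N}) = UNIV"
proof -
  obtain N where KN: "krylov A b N \<in> span (krylov A b ` {..<N})"
    using krylov_in_span_lessThan_exists by blast
  then have "range (krylov A b) \<subseteq> span (krylov A b ` {..<N})"
    using krylov_in_span by blast
  then have span_K: "span (krylov A b ` {..<N}) = UNIV"
    using assms by (metis span_minimal subspace_span top.extremum_uniqueI)
  have "0 < N"
  proof (rule ccontr)
    assume "\<not> 0 < N"
    then have "(1 :: real^'n) = 0" using span_K by (auto simp: set_eq_iff)
    then show False by (simp add: vec_eq_iff)
  qed
  obtain a where a: "krylov A b N = (\<Sum>i<N. a i *\<^sub>R krylov A b i)"
    using span_image_sum[OF _ KN] by blast
  define h where "h m = krylov_companion A b a N m" for m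
  let ?H = "(\<lambda>m. h (Suc m)) ` {..<N}"
  have "b \<in> span ?H"
    using \<open>0 < N\<close> krylov_companion_top[of A b a N]
    by (auto simp: h_def intro!: span_base rev_image_eqI[of "N - 1"])
  moreover have "h m \<in> span ?H" if "m \<le> N" for m
    using that krylov_companion_0[OF a] unfolding h_def
    by (cases m) (auto intro: span_base span_zero)
  ultimately have "A *v v \<in> span ?H" if "v \<in> ?H" for v
    using that by (auto simp: h_def krylov_companion_step intro!: span_add span_mul)
  with \<open>b \<in> span ?H\<close> have "krylov A b k \<in> span ?H" for k
    by (induction k) (auto intro: span_matrix_invariant)
  then have "span ?H = UNIV"
    using span_K by (metis image_subsetI span_minimal subspace_span top.extremum_uniqueI)
  with a show ?thesis using that by (simp add: h_def)
qed

lemma has_vector_derivative_higher_pderiv_sum: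
  fixes v :: "nat \<Rightarrow> 'a::real_normed_vector"
  shows "((\<lambda>t. \<Sum>m<N. poly ((pderiv ^^ m) p) t *\<^sub>R v m) has_vector_derivative
           (\<Sum>m<N. poly ((pderiv ^^ Suc m) p) t *\<^sub>R v m)) (at t within S)"
proof (rule has_vector_derivative_sum)
  fix m
  have "(poly ((pderiv ^^ m) p) has_real_derivative poly ((pderiv ^^ Suc m) p) t) (at t within S)"
    by (simp add: has_field_derivative_at_within[OF poly_DERIV])
  then show "((\<lambda>t. poly ((pderiv ^^ m) p) t *\<^sub>R v m) has_vector_derivative
               poly ((pderiv ^^ Suc m) p) t *\<^sub>R v m) (at t within S)"
    using has_vector_derivative_scaleR[OF _ has_vector_derivative_const[of "v m"]] by fastforce
qed

lemma controllable_if_companion_chain: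
  fixes A :: "real^'n^'n" and h :: "nat \<Rightarrow> real^'n"
  assumes h0: "h 0 = 0" and hN: "h N = b"
    and step: "\<And>m. m < N \<Longrightarrow> A *v h (Suc m) = h m + a m *\<^sub>R b"
    and span: "span ((\<lambda>m. h (Suc m)) ` {..<N}) = UNIV"
  shows "controllable A b"
  unfolding controllable_def
proof (intro allI)
  fix x0 x1 :: "real^'n"
  obtain \<alpha> \<beta> where \<alpha>: "x0 = (\<Sum>m<N. \<alpha> m *\<^sub>R h (Suc m))" and \<beta>: "x1 = (\<Sum>m<N. \<beta> m *\<^sub>R h (Suc m))"
    by (metis span span_image_sum finite_lessThan UNIV_I)
  obtain p where p: "\<forall>m<N. poly ((pderiv ^^ m) p) 0 = \<alpha> m \<and> poly ((pderiv ^^ m) p) 1 = \<beta> m"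
    using hermite_interpolation[of "0 :: real" 1 N \<alpha> \<beta>] by auto
  \<comment> \<open>x(t) = \<Sum>_m p^(m)(t) h (m+1); the input supplies the missing term p^(N)(t) h N = p^(N)(t) b.\<close>
  define \<phi> where "\<phi> m t = poly ((pderiv ^^ m) p) t" for m t
  define x where "x = (\<lambda>t. \<Sum>m<N. \<phi> m t *\<^sub>R h (Suc m))"
  define u where "u t = \<phi> N t - (\<Sum>m<N. a m * \<phi> m t)" for t
  have "A *v x t + u t *\<^sub>R b = (\<Sum>m<N. \<phi> (Suc m) t *\<^sub>R h (Suc m))" for t
  proof -
    have "A *v x t = (\<Sum>m<N. \<phi> m t *\<^sub>R h m) + (\<Sum>m<N. a m * \<phi> m t) *\<^sub>R b"
      by (simp add: x_def vec.sum matrix_vector_mult_scaleR step scaleR_add_right sum.distrib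
          scaleR_sum_left mult.commute)
    moreover have "(\<Sum>m<Suc N. \<phi> m t *\<^sub>R h m) = (\<Sum>m<N. \<phi> (Suc m) t *\<^sub>R h (Suc m))"
      by (subst sum.lessThan_Suc_shift) (simp add: h0)
    ultimately show ?thesis by (simp add: u_def hN algebra_simps)
  qed
  then have "(x has_vector_derivative A *v x t + u t *\<^sub>R b) (at t within {0..1})" for t
    using has_vector_derivative_higher_pderiv_sum[where v = "\<lambda>m. h (Suc m)" and N = N]
    by (simp add: x_def \<phi>_def)
  moreover have "continuous_on {0..1} u"
    unfolding u_def \<phi>_def by (intro continuous_intros continuous_on_poly)
  moreover have "x 0 = x0" "x 1 = x1"
    using p by (simp_all add: x_def \<phi>_def \<alpha> \<beta>)
  ultimately show "\<exists>T>0. \<exists>u x. continuous_on {0..T} u \<and> x 0 = x0 \<and> x T = x1 \<and>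
      (\<forall>t\<in>{0..T}. (x has_vector_derivative A *v x t + u t *\<^sub>R b) (at t within {0..T}))"
    by (intro exI[of _ 1] exI[of _ u] exI[of _ x]) auto
qed

lemma controllable_if_krylov_span:
  fixes A :: "real^'n^'n"
  assumes "span (range (krylov A b)) = UNIV"
  shows "controllable A b"
proof -
  obtain N a where "krylov A b N = (\<Sum>i<N. a i *\<^sub>R krylov A b i)"
    "span ((\<lambda>m. krylov_companion A b a N (Suc m)) ` {..<N}) = UNIV"
    using krylov_companion_basis[OF assms] by blast
  then show ?thesis
    by (intro controllable_if_companion_chain[where h = "krylov_companion A b a N" and N = N and a = a])
      (simp_all add: krylov_companion_0 krylov_companion_top krylov_companion_step)
qed

section \<open>Left eigenvectors\<close>

lemma sum_power_eq_0_imp_eq_0: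
  fixes d :: "'a::idom \<Rightarrow> 'a"
  assumes "finite E" "\<And>k. (\<Sum>\<mu>\<in>E. d \<mu> * \<mu> ^ k) = 0" "\<mu> \<in> E"
  shows "d \<mu> = 0"
proof -
  define q where "q = (\<Prod>\<nu>\<in>E - {\<mu>}. [:- \<nu>, 1:])"
  have "(\<Sum>\<nu>\<in>E. d \<nu> * poly q \<nu>) = (\<Sum>k\<le>degree q. coeff q k * (\<Sum>\<nu>\<in>E. d \<nu> * \<nu> ^ k))"
    by (simp add: poly_altdef sum_distrib_left sum.swap[of _ E] ac_simps)
  also have "\<dots> = 0" by (simp add: assms(2))
  finally have "(\<Sum>\<nu>\<in>E. d \<nu> * poly q \<nu>) = 0" .
  moreover have "poly q \<nu> = 0" if "\<nu> \<in> E - {\<mu>}" for \<nu>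
    using that assms(1) by (auto simp: q_def poly_prod)
  moreover have "poly q \<mu> \<noteq> 0"
    using assms(1) by (simp add: q_def poly_prod)
  ultimately show ?thesis
    using assms(1,3) by (simp add: sum.remove)
qed

lemma left_null_vector_exists:
  fixes M :: "'a::field^'n^'n"
  assumes "v \<noteq> 0" "M *v v = 0"
  obtains w where "w \<noteq> 0" "w v* M = 0"
proof -
  have "\<not> invertible M" using assms by (metis invertible_def matrix_left_invertible_ker)
  then have "\<not> invertible (transpose M)" by (simp add: invertible_det_nz)
  then show ?thesis using that
    by (metis invertible_left_inverse matrix_left_invertible_ker transpose_matrix_vector)
qed

lemma vector_matrix_mult_mat: "(w :: 'a::field^'n) v* mat l = l *s w"
  by (simp add: vec_eq_iff vector_matrix_mult_def mat_def mult.commute if_distrib[of "\<lambda>x. _ * x"]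
      cong: if_cong)

lemma matrix_vector_mult_mat: "mat l *v (v :: 'a::field^'n) = l *s v"
  by (simp add: vec_eq_iff matrix_vector_mult_def mat_def if_distrib[of "\<lambda>x. x * _"] cong: if_cong)

lemma left_eigvec_exists:
  fixes M :: "'a::field^'n^'n"
  assumes "v \<noteq> 0" "M *v v = l *s v"
  obtains w where "w \<noteq> 0" "w v* M = l *s w"
proof -
  have "(M - mat l) *v v = 0"
    using assms(2) by (simp add: matrix_vector_mult_diff_rdistrib matrix_vector_mult_mat)
  then obtain w where "w \<noteq> 0" "w v* (M - mat l) = 0"
    using assms(1) left_null_vector_exists by blast
  then have "w v* M = l *s w"
    by (simp add: vector_matrix_mult_diff_rdistrib vector_matrix_mult_mat)
  with \<open>w \<noteq> 0\<close> that show ?thesis by blast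
qed

lemma vector_matrix_mult_scale: "(c *s w) v* (M :: 'a::field^'n^'m) = c *s (w v* M)"
  by (simp flip: transpose_matrix_vector add: vec.scale)

lemma vector_matrix_mult_sum_scale:
  "(\<Sum>i\<in>I. c i *s w i) v* (M :: 'a::field^'n^'m) = (\<Sum>i\<in>I. c i *s (w i v* M))"
  by (simp flip: transpose_matrix_vector add: vec.sum vec.scale)

lemma left_eigvecs_scalars_zero:
  fixes M :: "'a::field^'n^'n"
  assumes fin: "finite E" and W: "\<And>\<mu>. \<mu> \<in> E \<Longrightarrow> W \<mu> \<noteq> 0 \<and> W \<mu> v* M = \<mu> *s W \<mu>"
    and sum0: "(\<Sum>\<mu>\<in>E. c \<mu> *s W \<mu>) = 0" and "\<mu> \<in> E"
  shows "c \<mu> = 0"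
proof -
  have powers: "(\<Sum>\<nu>\<in>E. (c \<nu> * \<nu> ^ k) *s W \<nu>) = 0" for k
  proof (induction k)
    case (Suc k)
    have "(\<Sum>\<nu>\<in>E. (c \<nu> * \<nu> ^ k) *s W \<nu>) v* M = (\<Sum>\<nu>\<in>E. (c \<nu> * \<nu> ^ Suc k) *s W \<nu>)"
      unfolding vector_matrix_mult_sum_scale by (rule sum.cong) (auto simp: W ac_simps)
    with Suc show ?case by simp
  qed (use sum0 in simp)
  have "c \<mu> * W \<mu> $ r = 0" for r
  proof (rule sum_power_eq_0_imp_eq_0[OF fin _ \<open>\<mu> \<in> E\<close>])
    fix k
    show "(\<Sum>\<nu>\<in>E. c \<nu> * W \<nu> $ r * \<nu> ^ k) = 0"
      using arg_cong[OF powers, of "\<lambda>v. v $ r"] by (simp add: ac_simps)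
  qed
  moreover obtain r where "W \<mu> $ r \<noteq> 0" using W[OF \<open>\<mu> \<in> E\<close>] by (metis vec_eq_iff zero_index)
  ultimately show ?thesis by (metis mult_eq_0_iff)
qed

lemma left_eigvecs_inj:
  fixes M :: "'a::field^'n^'n"
  assumes "\<And>\<mu>. \<mu> \<in> E \<Longrightarrow> W \<mu> \<noteq> 0 \<and> W \<mu> v* M = \<mu> *s W \<mu>"
  shows "inj_on W E"
  using assms by (intro inj_onI) (metis vector_mul_rcancel)

lemma left_eigvecs_span:
  fixes M :: "'a::field^'n^'n"
  assumes fin: "finite E" and card: "card E = CARD('n)"
    and W: "\<And>\<mu>. \<mu> \<in> E \<Longrightarrow> W \<mu> \<noteq> 0 \<and> W \<mu> v* M = \<mu> *s W \<mu>"
  shows "vec.span (W ` E) = UNIV"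
proof -
  have inj: "inj_on W E" using left_eigvecs_inj W by blast
  have "vec.independent (W ` E)"
  proof (rule vec.independent_if_scalars_zero)
    fix f x assume "(\<Sum>x\<in>W ` E. f x *s x) = 0" "x \<in> W ` E"
    then show "f x = 0"
      using left_eigvecs_scalars_zero[OF fin W, of "f \<circ> W"] by (auto simp: sum.reindex[OF inj])
  qed (use fin in simp)
  moreover have "card (W ` E) = vec.dim (UNIV :: ('a^'n) set)"
    by (simp only: card_image[OF inj] card vec_dim_card)
  ultimately show ?thesis
    using fin by (auto simp: vec.card_eq_dim[of "W ` E" UNIV])
qed

section \<open>The Popov--Belevitch--Hautus test\<close>

text \<open>The unconjugated pairing w^T v; for w = cvec_cnj x it is x^H v.\<close>

definition cdot :: "complex^'n \<Rightarrow> real^'n \<Rightarrow> complex" where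
  "cdot w v = (\<Sum>j\<in>UNIV. w $ j * complex_of_real (v $ j))"

lemma cdot_matrix_vector_mult:
  assumes "w v* cmat A = l *s w"
  shows "cdot w (A *v v) = l * cdot w v"
proof -
  have "cdot w (A *v v) = (\<Sum>i\<in>UNIV. (\<Sum>j\<in>UNIV. w $ j * cmat A $ j $ i) * complex_of_real (v $ i))"
    unfolding cdot_def matrix_vector_mult_def cmat_def
    by (simp add: sum_distrib_left sum_distrib_right mult.assoc) (rule sum.swap)
  also have "\<dots> = l * cdot w v"
    using assms by (simp add: vector_matrix_mult_def vec_eq_iff cdot_def sum_distrib_left mult.assoc)
  finally show ?thesis .
qed

lemma cdot_krylov:
  assumes "w v* cmat A = l *s w"
  shows "cdot w (krylov A b k) = l ^ k * cdot w b"
  by (induction k) (simp_all add: cdot_matrix_vector_mult[OF assms])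

lemma cdot_sum_left: "cdot (\<Sum>i\<in>I. c i *s w i) v = (\<Sum>i\<in>I. c i * cdot (w i) v)"
  unfolding cdot_def by (simp add: sum_distrib_left sum_distrib_right mult.assoc) (rule sum.swap)

lemma cdot_of_real_vec: "cdot (\<chi> j. complex_of_real (\<eta> $ j)) v = complex_of_real (\<eta> \<bullet> v)"
  by (simp add: cdot_def inner_vec_def)

lemma cdot_axis: "cdot w (axis k 1) = w $ k"
  by (simp add: cdot_def axis_def if_distrib[of complex_of_real] if_distrib[of "\<lambda>x. _ * x"]
      cong: if_cong)

lemma cdot_eq_0_if_disjoint_supp:
  assumes "supp_vec w \<inter> supp_vec v = {}"
  shows "cdot w v = 0"
  using assms by (auto simp: cdot_def supp_vec_def intro!: sum.neutral)

lemma bounded_linear_cdot: "bounded_linear (cdot w)"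
proof -
  have "linear (cdot w)"
    by (rule linearI)
      (simp_all add: cdot_def sum.distrib distrib_left scaleR_sum_right ac_simps flip: scaleR_conv_of_real)
  then show ?thesis by (simp add: linear_conv_bounded_linear)
qed

lemma cdot_left_eigvec_solution:
  fixes A :: "real^'n^'n" and x :: "real \<Rightarrow> real^'n"
  assumes der: "\<And>t. t \<in> {0..T} \<Longrightarrow> (x has_vector_derivative A *v x t + u t *\<^sub>R b) (at t within {0..T})"
    and eig: "w v* cmat A = l *s w" and orth: "cdot w b = 0" and "0 \<le> T"
  shows "cdot w (x T) = exp (T *\<^sub>R l) * cdot w (x 0)"
proof -
  define z where "z = (\<lambda>t. cdot w (x t) * exp (- (t *\<^sub>R l)))"
  have z_deriv: "(z has_vector_derivative 0) (at t within {0..T})" if "t \<in> {0..T}" for t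
  proof -
    have "((\<lambda>t. cdot w (x t)) has_vector_derivative l * cdot w (x t)) (at t within {0..T})"
      using bounded_linear.has_vector_derivative[OF bounded_linear_cdot[of w] der[OF that]]
      by (simp add: bounded_linear.linear[OF bounded_linear_cdot] linear_add linear_scale
          cdot_matrix_vector_mult[OF eig] orth)
    from has_vector_derivative_mult[OF exp_scaleR_has_vector_derivative_right[of "- l"] this]
    show ?thesis by (simp add: z_def algebra_simps)
  qed
  obtain c where "\<And>t. t \<in> {0..T} \<Longrightarrow> z t = c"
    using has_vector_derivative_zero_constant[OF convex_closed_interval(1) z_deriv] by blast
  then have "z T = z 0" using \<open>0 \<le> T\<close> by simp
  have "cdot w (x T) = cdot w (x T) * exp (- (T *\<^sub>R l)) * exp (T *\<^sub>R l)"
    by (simp add: mult.assoc flip: exp_add)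
  also have "\<dots> = exp (T *\<^sub>R l) * cdot w (x 0)"
    using \<open>z T = z 0\<close> by (simp add: z_def)
  finally show ?thesis .
qed

lemma controllable_imp_cdot_left_eigvec_ne_0:
  assumes "controllable A b" "w \<noteq> 0" "w v* cmat A = l *s w"
  shows "cdot w b \<noteq> 0"
proof
  assume orth: "cdot w b = 0"
  obtain k where "w $ k \<noteq> 0" using \<open>w \<noteq> 0\<close> by (metis vec_eq_iff zero_index)
  obtain T u x where "T > 0" "x 0 = 0" "x T = axis k 1"
    and "\<And>t. t \<in> {0..T} \<Longrightarrow> (x has_vector_derivative A *v x t + u t *\<^sub>R b) (at t within {0..T})"
    using \<open>controllable A b\<close> unfolding controllable_def by blast
  then have "cdot w (axis k 1) = exp (T *\<^sub>R l) * cdot w 0"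
    using cdot_left_eigvec_solution[OF _ assms(3) orth] by (metis less_imp_le)
  then show False
    using \<open>w $ k \<noteq> 0\<close> by (simp add: cdot_axis) (simp add: cdot_def)
qed

lemma span_eq_UNIV_if_orthogonal_imp_0:
  fixes S :: "'a::euclidean_space set"
  assumes "\<And>\<eta>. (\<And>v. v \<in> S \<Longrightarrow> \<eta> \<bullet> v = 0) \<Longrightarrow> \<eta> = 0"
  shows "span S = UNIV"
proof (rule ccontr)
  assume "span S \<noteq> UNIV"
  then have "dim S < DIM('a)"
    using dim_eq_full[of S] dim_subset_UNIV[of S] by simp
  then obtain \<eta> where "\<eta> \<noteq> 0" "\<And>v. v \<in> span S \<Longrightarrow> orthogonal \<eta> v"
    using orthogonal_to_subspace_exists by blast
  with assms show False by (metis orthogonal_def span_base)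
qed

lemma krylov_span_if_left_eigvecs:
  fixes A :: "real^'n^'n"
  assumes fin: "finite E" and card: "card E = CARD('n)"
    and W: "\<And>\<mu>. \<mu> \<in> E \<Longrightarrow> W \<mu> \<noteq> 0 \<and> W \<mu> v* cmat A = \<mu> *s W \<mu>"
    and nz: "\<And>\<mu>. \<mu> \<in> E \<Longrightarrow> cdot (W \<mu>) b \<noteq> 0"
  shows "span (range (krylov A b)) = UNIV"
proof (rule span_eq_UNIV_if_orthogonal_imp_0)
  fix \<eta> :: "real^'n" assume orth: "\<And>v. v \<in> range (krylov A b) \<Longrightarrow> \<eta> \<bullet> v = 0"
  define \<eta>c :: "complex^'n" where "\<eta>c = (\<chi> j. complex_of_real (\<eta> $ j))"
  have "\<eta>c \<in> vec.span (W ` E)" using left_eigvecs_span[OF fin card W] by simp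
  then obtain u where "\<eta>c = (\<Sum>v\<in>W ` E. u v *s v)"
    using fin by (auto simp: vec.span_finite)
  then have \<eta>c_sum: "\<eta>c = (\<Sum>\<mu>\<in>E. u (W \<mu>) *s W \<mu>)"
    by (simp add: sum.reindex[OF left_eigvecs_inj[OF W]])
  have "u (W \<mu>) * cdot (W \<mu>) b = 0" if "\<mu> \<in> E" for \<mu>
  proof (rule sum_power_eq_0_imp_eq_0[OF fin _ that])
    fix k
    have "(\<Sum>\<mu>\<in>E. u (W \<mu>) * cdot (W \<mu>) b * \<mu> ^ k) = cdot \<eta>c (krylov A b k)"
      by (simp add: \<eta>c_sum cdot_sum_left cdot_krylov W ac_simps)
    also have "\<dots> = 0" using orth by (simp add: \<eta>c_def cdot_of_real_vec)
    finally show "(\<Sum>\<mu>\<in>E. u (W \<mu>) * cdot (W \<mu>) b * \<mu> ^ k) = 0" .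
  qed
  then have "\<eta>c = 0" using nz by (simp add: \<eta>c_sum)
  then show "\<eta> = 0" by (simp add: \<eta>c_def vec_eq_iff)
qed

section \<open>Choice of the input vector\<close>

lemma exists_supported_vec_cdot_ne_0:
  fixes W :: "complex \<Rightarrow> complex^'n"
  assumes fin: "finite E" and meets: "\<And>\<mu>. \<mu> \<in> E \<Longrightarrow> supp_vec (W \<mu>) \<inter> Sv \<noteq> {}"
  obtains b :: "real^'n" where "supp_vec b \<subseteq> Sv" "\<And>\<mu>. \<mu> \<in> E \<Longrightarrow> cdot (W \<mu>) b \<noteq> 0"
proof -
  obtain idx :: "'n \<Rightarrow> nat" where inj: "inj idx"
    using finite_imp_inj_to_nat_seg[of "UNIV :: 'n set"] by auto
  define P where "P \<mu> = (\<Sum>j\<in>Sv. monom (W \<mu> $ j) (idx j))" for \<mu>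
  have "P \<mu> \<noteq> 0" if \<mu>: "\<mu> \<in> E" for \<mu>
  proof -
    obtain j0 where j0: "j0 \<in> Sv" "W \<mu> $ j0 \<noteq> 0" using meets[OF \<mu>] by (auto simp: supp_vec_def)
    have "coeff (P \<mu>) (idx j0) = (\<Sum>j\<in>Sv. if j = j0 then W \<mu> $ j else 0)"
      unfolding P_def coeff_sum coeff_monom by (rule sum.cong) (use inj in \<open>auto simp: inj_def\<close>)
    then show ?thesis using j0 by auto
  qed
  then have "finite (\<Union>\<mu>\<in>E. {z. poly (P \<mu>) z = 0})"
    using fin poly_roots_finite by blast
  then have "finite {t. complex_of_real t \<in> (\<Union>\<mu>\<in>E. {z. poly (P \<mu>) z = 0})}"
    by (rule finite_vimageI[unfolded vimage_def]) (simp add: inj_on_def)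
  then obtain t :: real where t: "\<And>\<mu>. \<mu> \<in> E \<Longrightarrow> poly (P \<mu>) (complex_of_real t) \<noteq> 0"
    using ex_new_if_finite[OF infinite_UNIV_char_0] by blast
  define b :: "real^'n" where "b = (\<chi> j. if j \<in> Sv then t ^ idx j else 0)"
  have "cdot (W \<mu>) b = poly (P \<mu>) (complex_of_real t)" for \<mu>
    by (simp add: cdot_def b_def P_def poly_sum poly_monom if_distrib[of complex_of_real]
        if_distrib[of "\<lambda>x. _ * x"] sum.If_cases cong: if_cong)
  moreover have "supp_vec b \<subseteq> Sv" by (auto simp: supp_vec_def b_def)
  ultimately show ?thesis using that t by metis
qed

lemma cvec_cnj_eq_0_iff [simp]: "cvec_cnj x = 0 \<longleftrightarrow> x = 0"
  by (simp add: cvec_cnj_def vec_eq_iff)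

lemma supp_vec_cvec_cnj [simp]: "supp_vec (cvec_cnj x) = supp_vec x"
  by (simp add: supp_vec_def cvec_cnj_def)

lemma normalized_left_eigvec_exists:
  assumes "w \<noteq> 0" and eig: "w v* cmat A = l *s w"
  obtains x where "left_eigvec A l x" "norm x = 1" "first_nonzero_pos x" "supp_vec x = supp_vec w"
proof -
  define k where "k = Min (supp_vec w)"
  have "supp_vec w \<noteq> {}" using \<open>w \<noteq> 0\<close> by (auto simp: supp_vec_def vec_eq_iff)
  then have wk: "w $ k \<noteq> 0"
    using Min_in[of "supp_vec w"] by (simp add: k_def supp_vec_def)
  have before_k: "w $ j = 0" if "j < k" for j
    using Min_le[of "supp_vec w" j] that unfolding k_def supp_vec_def by fastforce
  define s where "s = w $ k / complex_of_real (cmod (w $ k) * norm w)"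
  define x where "x = (\<chi> j. cnj (w $ j) * s)"
  have "s \<noteq> 0" using wk \<open>w \<noteq> 0\<close> by (simp add: s_def)
  then have supp: "supp_vec x = supp_vec w" by (auto simp: supp_vec_def x_def)
  have "x $ k = cnj (w $ k) * w $ k / complex_of_real (cmod (w $ k) * norm w)"
    by (simp add: x_def s_def)
  also have "cnj (w $ k) * w $ k = complex_of_real ((cmod (w $ k))\<^sup>2)"
    by (metis complex_norm_square mult.commute)
  finally have xk: "x $ k = complex_of_real (cmod (w $ k) / norm w)"
    using wk by (simp add: power2_eq_square)
  have "x \<noteq> 0" using supp wk by (auto simp: supp_vec_def)
  moreover have "cvec_cnj x = cnj s *s w" by (simp add: cvec_cnj_def x_def vec_eq_iff mult.commute)
  ultimately have "left_eigvec A l x"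
    by (simp add: left_eigvec_def vector_matrix_mult_scale eig mult.commute)
  moreover have "first_nonzero_pos x"
    unfolding first_nonzero_pos_def
  proof (intro exI[of _ k] conjI allI impI)
    show "x $ k \<noteq> 0" "Im (x $ k) = 0" "Re (x $ k) > 0" using xk wk \<open>w \<noteq> 0\<close> by simp_all
    show "x $ j = 0" if "j < k" for j using before_k[OF that] by (simp add: x_def)
  qed
  moreover have "norm x = 1"
  proof -
    have "norm x = L2_set (\<lambda>j. cmod s * cmod (w $ j)) UNIV"
      by (simp add: norm_vec_def x_def norm_mult mult.commute)
    also have "\<dots> = cmod s * norm w" by (simp add: norm_vec_def L2_set_right_distrib)
    finally show ?thesis using wk \<open>w \<noteq> 0\<close> by (simp add: s_def norm_divide norm_mult)
  qed
  ultimately show ?thesis using that supp by blast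
qed

theorem theorem1:
  fixes A :: "((real, 'n::{finite,linorder}) vec, 'n) vec" and Sv :: "'n set"
  assumes "card (eigenvalues A) = CARD('n)"
  shows "(\<exists>b :: (real, 'n) vec. supp_vec b \<subseteq> Sv \<and> controllable A b) \<longleftrightarrow>
         (\<forall>l\<in>eigenvalues A. \<forall>x. left_eigvec A l x \<and> norm x = 1 \<and> first_nonzero_pos x
             \<longrightarrow> supp_vec x \<inter> Sv \<noteq> {})"
proof
  assume "\<exists>b :: (real, 'n) vec. supp_vec b \<subseteq> Sv \<and> controllable A b"
  then obtain b :: "(real, 'n) vec" where b: "supp_vec b \<subseteq> Sv" "controllable A b" by blast
  show "\<forall>l\<in>eigenvalues A. \<forall>x. left_eigvec A l x \<and> norm x = 1 \<and> first_nonzero_pos x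
      \<longrightarrow> supp_vec x \<inter> Sv \<noteq> {}"
  proof (intro ballI allI impI notI)
    fix l x assume "left_eigvec A l x \<and> norm x = 1 \<and> first_nonzero_pos x" "supp_vec x \<inter> Sv = {}"
    moreover from this have "cdot (cvec_cnj x) b = 0"
      using b(1) by (intro cdot_eq_0_if_disjoint_supp) auto
    ultimately show False
      using controllable_imp_cdot_left_eigvec_ne_0[OF b(2)] by (auto simp: left_eigvec_def)
  qed
next
  assume meets: "\<forall>l\<in>eigenvalues A. \<forall>x. left_eigvec A l x \<and> norm x = 1 \<and> first_nonzero_pos x
      \<longrightarrow> supp_vec x \<inter> Sv \<noteq> {}"
  have fin: "finite (eigenvalues A)" using assms card_gt_0_iff by fastforce
  have "\<exists>w. w \<noteq> 0 \<and> w v* cmat A = \<mu> *s w" if \<mu>: "\<mu> \<in> eigenvalues A" for \<mu>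
  proof -
    obtain v where "v \<noteq> 0" "cmat A *v v = \<mu> *s v" using \<mu> by (auto simp: eigenvalues_def)
    then show ?thesis by (metis left_eigvec_exists)
  qed
  then obtain W where W: "\<And>\<mu>. \<mu> \<in> eigenvalues A \<Longrightarrow> W \<mu> \<noteq> 0 \<and> W \<mu> v* cmat A = \<mu> *s W \<mu>"
    by metis
  have "supp_vec (W \<mu>) \<inter> Sv \<noteq> {}" if \<mu>: "\<mu> \<in> eigenvalues A" for \<mu>
  proof -
    obtain x where "left_eigvec A \<mu> x" "norm x = 1" "first_nonzero_pos x" "supp_vec x = supp_vec (W \<mu>)"
      using normalized_left_eigvec_exists W[OF \<mu>] by blast
    with meets \<mu> show ?thesis by (metis (no_types))
  qed
  then obtain b :: "(real, 'n) vec" where "supp_vec b \<subseteq> Sv" "\<And>\<mu>. \<mu> \<in> eigenvalues A \<Longrightarrow> cdot (W \<mu>) b \<noteq> 0"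
    using exists_supported_vec_cdot_ne_0[OF fin] by metis
  moreover from this(2) have "controllable A b"
    by (intro controllable_if_krylov_span krylov_span_if_left_eigvecs[OF fin assms W])
  ultimately show "\<exists>b :: (real, 'n) vec. supp_vec b \<subseteq> Sv \<and> controllable A b" by blast
qed

end
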